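(* Let $n\ge 5$ and let $\sigma$ be a maximal simplex of $\Delta_n$ that covers all places. If there exists $w\in\sigma$ with $N(w)\cap\sigma=\{v\}$, then $\sigma=N(v)\cup K_v^{i_0,j_0,k_0}$ for some distinct $i_0,j_0,k_0\in[n]$.
   Context: $\mathbb{I}_n$ is the $n$-dimensional hypercube graph on vertex set $\{0,1\}^n$ (adjacent iff differing in exactly one coordinate), with Hamming distance $d(v,w)=\#\{i: v(i)\ne w(i)\}$, $v(i)$ the $i$-th coordinate. $\Delta_n=\mathcal{VR}(\mathbb{I}_n;3)$ is the simplicial complex whose simplices are the subsets $\sigma\subseteq\{0,1\}^n$ with $d(x,y)\le 3$ for all $x,y\in\sigma$. A simplex $\sigma$ covers all places if for each $i\in[n]=\{1,\dots,n\}$ there are $v,w\in\sigma$ with $v(i)=1$ and $w(i)=0$. For a vertex $v$ and distinct $i_1,\dots,i_k$, $v^{i_1,\dots,i_k}$ is $v$ with exactly coordinates $i_1,\dots,i_k$ changed. $N(v)=\{v^i: i\in[n]\}$. For distinct $i,j,k$, $K_v^{i,j,k}=\{v,v^{i,j},v^{j,k},v^{i,k}\}$. *)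

theory Defs
  imports Main
begin

text \<open>Vertices of the n-cube: functions nat => bool that are False outside [n] = {1..n}
  (True encodes coordinate value 1, False encodes 0).\<close>
definition cube_verts :: "nat \<Rightarrow> (nat \<Rightarrow> bool) set" where
  "cube_verts n = {v. \<forall>i. i \<notin> {1..n} \<longrightarrow> \<not> v i}"

definition hdist :: "nat \<Rightarrow> (nat \<Rightarrow> bool) \<Rightarrow> (nat \<Rightarrow> bool) \<Rightarrow> nat" where
  "hdist n v w = card {i \<in> {1..n}. v i \<noteq> w i}"

text \<open>Simplices of Delta_n = VR(I_n; 3): nonempty sets of vertices of pairwise distance at most 3.\<close>
definition is_simplex :: "nat \<Rightarrow> (nat \<Rightarrow> bool) set \<Rightarrow> bool" where
  "is_simplex n \<sigma> \<longleftrightarrow> \<sigma> \<noteq> {} \<and> \<sigma> \<subseteq> cube_verts n \<and>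
     (\<forall>x\<in>\<sigma>. \<forall>y\<in>\<sigma>. hdist n x y \<le> 3)"

definition maximal_simplex :: "nat \<Rightarrow> (nat \<Rightarrow> bool) set \<Rightarrow> bool" where
  "maximal_simplex n \<sigma> \<longleftrightarrow> is_simplex n \<sigma> \<and> (\<forall>\<tau>. is_simplex n \<tau> \<and> \<sigma> \<subseteq> \<tau> \<longrightarrow> \<tau> = \<sigma>)"

definition covers_all_places :: "nat \<Rightarrow> (nat \<Rightarrow> bool) set \<Rightarrow> bool" where
  "covers_all_places n \<sigma> \<longleftrightarrow> (\<forall>i\<in>{1..n}. \<exists>v\<in>\<sigma>. \<exists>w\<in>\<sigma>. v i \<and> \<not> w i)"

definition flip :: "(nat \<Rightarrow> bool) \<Rightarrow> nat set \<Rightarrow> (nat \<Rightarrow> bool)" where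
  "flip v I = (\<lambda>i. if i \<in> I then \<not> v i else v i)"

definition nbhd :: "nat \<Rightarrow> (nat \<Rightarrow> bool) \<Rightarrow> (nat \<Rightarrow> bool) set" where
  "nbhd n v = {flip v {i} | i. i \<in> {1..n}}"

definition Kset :: "(nat \<Rightarrow> bool) \<Rightarrow> nat \<Rightarrow> nat \<Rightarrow> nat \<Rightarrow> (nat \<Rightarrow> bool) set" where
  "Kset v i j k = {v, flip v {i, j}, flip v {j, k}, flip v {i, k}}"

end

theory Submission
  imports Defs
begin

text \<open>
  Encode each vertex x by the set of coordinates in which it differs from w. Then \<sigma> becomes a
  family F of subsets of [n] whose pairwise symmetric differences have at most 3 elements,
  maximal with this property, containing \<emptyset>, covering [n], and whose only singleton is {l},
  where v = w^l. Every member has at most 3 elements and every 3-element member contains l,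
  so the 3-element members are l \<union> e for a family of pairwise intersecting pairs e. If all of
  these pairs shared a point c, then {c} could be added to F; hence they form a triangle
  {i,j}, {j,k}, {i,k}. A point x outside {l,i,j,k}, which exists because n \<ge> 5, can only be
  covered by {l,x}, and this forces every 2-element member to contain l; maximality then adds
  all {l,m}. Moving the base point from w to v turns F into N(v) \<union> K_v^{i,j,k}.
\<close>

lemma card_sym_diff:
  assumes "finite A" "finite B"
  shows "card (sym_diff A B) + 2 * card (A \<inter> B) = card A + card B"
proof -
  have "card (sym_diff A B) = card (A - B) + card (B - A)"
    using assms by (intro card_Un_disjoint) auto
  moreover have "card A = card (A \<inter> B) + card (A - B)" "card B = card (B \<inter> A) + card (B - A)"
    using assms by (simp_all add: card_Int_Diff)
  ultimately show ?thesis by (simp add: Int_commute)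
qed

lemma pair_meeting_triangle:
  assumes "card e = 2" "distinct [i, j, k]"
    and "e \<inter> {i, j} \<noteq> {}" "e \<inter> {j, k} \<noteq> {}" "e \<inter> {i, k} \<noteq> {}"
  shows "e = {i, j} \<or> e = {j, k} \<or> e = {i, k}"
proof -
  obtain a b where "e = {a, b}" "a \<noteq> b" using assms(1) by (auto simp: card_2_iff)
  moreover have "a \<in> {i, j, k}" "b \<in> {i, j, k}"
    using assms(2-) \<open>e = {a, b}\<close> by auto
  ultimately show ?thesis using assms(2) by auto
qed

lemma intersecting_pairs_triangle:
  assumes pairs: "\<forall>e\<in>E. card e = 2"
    and intersecting: "\<forall>e\<in>E. \<forall>f\<in>E. e \<inter> f \<noteq> {}"
    and not_star: "\<forall>c. \<exists>e\<in>E. c \<notin> e"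
  shows "\<exists>i j k. distinct [i, j, k] \<and> E = {{i, j}, {j, k}, {i, k}}"
proof -
  have pair: "\<exists>a b. e = {a, b} \<and> a \<noteq> b" if "e \<in> E" for e
    using that pairs by (simp add: card_2_iff)
  obtain i j where ij: "{i, j} \<in> E" "i \<noteq> j" using not_star pair by (metis insertCI)
  obtain f where f: "f \<in> E" "i \<notin> f" using not_star by blast
  then have "j \<in> f" using intersecting[rule_format, OF ij(1) f(1)] by blast
  then obtain k where "f = {j, k}" "k \<noteq> j" using pair[OF f(1)] by (auto simp: insert_commute)
  then have jk: "{j, k} \<in> E" "k \<noteq> i" "k \<noteq> j" using f by auto
  obtain g where g: "g \<in> E" "j \<notin> g" using not_star by blast
  then have "g = {i, k}"
    using intersecting[rule_format, OF ij(1) g(1)] intersecting[rule_format, OF jk(1) g(1)]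
      pair[OF g(1)] jk(2) by (auto simp: insert_commute)
  then have ik: "{i, k} \<in> E" using g by simp
  have ijk: "distinct [i, j, k]" using ij jk by auto
  have "e = {i, j} \<or> e = {j, k} \<or> e = {i, k}" if "e \<in> E" for e
    using pairs that ij(1) jk(1) ik intersecting[rule_format, OF that]
    by (intro pair_meeting_triangle[OF _ ijk]) blast+
  then show ?thesis using ijk ij jk ik by blast
qed

definition close_family :: "'a set \<Rightarrow> 'a set set \<Rightarrow> bool" where
  "close_family U F \<longleftrightarrow> F \<subseteq> Pow U \<and> (\<forall>X\<in>F. \<forall>Y\<in>F. card (sym_diff X Y) \<le> 3)"

definition maximal_close_family :: "'a set \<Rightarrow> 'a set set \<Rightarrow> bool" where
  "maximal_close_family U F \<longleftrightarrow> close_family U F \<and>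
     (\<forall>X. X \<subseteq> U \<and> (\<forall>Y\<in>F. card (sym_diff X Y) \<le> 3) \<longrightarrow> X \<in> F)"

lemma close_family_insert:
  assumes "close_family U F" "X \<subseteq> U" "\<forall>Y\<in>F. card (sym_diff X Y) \<le> 3"
  shows "close_family U (insert X F)"
  using assms unfolding close_family_def by (auto simp: Un_commute)

locale single_neighbour_family =
  fixes U :: "'a set" and F :: "'a set set" and l :: 'a
  assumes finite_U: "finite U"
    and card_U: "5 \<le> card U"
    and maximal: "maximal_close_family U F"
    and empty_in: "{} \<in> F"
    and singleton_in_iff: "{c} \<in> F \<longleftrightarrow> c = l"
    and covers: "U \<subseteq> \<Union>F"
begin

lemma member_subset: "X \<in> F \<Longrightarrow> X \<subseteq> U"
  using maximal by (auto simp: maximal_close_family_def close_family_def)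

lemma finite_member: "X \<in> F \<Longrightarrow> finite X"
  using member_subset finite_U finite_subset by blast

lemma l_in_U: "l \<in> U"
  using member_subset[of "{l}"] singleton_in_iff by simp

lemma card_le_member_Int:
  assumes "X \<in> F" "Y \<in> F"
  shows "card X + card Y \<le> 3 + 2 * card (X \<inter> Y)"
proof -
  have "card (sym_diff X Y) \<le> 3"
    using maximal assms unfolding maximal_close_family_def close_family_def by blast
  then show ?thesis using card_sym_diff[OF finite_member finite_member, OF assms] by linarith
qed

lemma in_family_if_close:
  assumes "X \<subseteq> U" "\<And>Y. Y \<in> F \<Longrightarrow> card X + card Y \<le> 3 + 2 * card (X \<inter> Y)"
  shows "X \<in> F"
proof -
  have "finite X" using assms(1) finite_U finite_subset by blast
  then have "card (sym_diff X Y) \<le> 3" if "Y \<in> F" for Y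
    using assms(2)[OF that] card_sym_diff[OF \<open>finite X\<close> finite_member[OF that]]
    by linarith
  then show ?thesis
    using maximal assms(1) unfolding maximal_close_family_def by simp
qed

lemma card_member_le: "X \<in> F \<Longrightarrow> card X \<le> 3"
  using card_le_member_Int[OF _ empty_in] by simp

lemma member_card_3_contains_l:
  assumes "X \<in> F" "card X = 3"
  shows "l \<in> X"
proof (rule ccontr)
  assume "l \<notin> X"
  then have "X \<inter> {l} = {}" by blast
  then show False
    using card_le_member_Int[OF assms(1), of "{l}"] singleton_in_iff assms(2) by simp
qed

definition link :: "'a set set" where
  "link = {e. card e = 2 \<and> l \<notin> e \<and> insert l e \<in> F}"

lemma member_card_3_link:
  assumes "X \<in> F" "card X = 3"
  obtains e where "e \<in> link" "X = insert l e"
proof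
  have "l \<in> X" using member_card_3_contains_l[OF assms] .
  then show X: "X = insert l (X - {l})" by blast
  have "card (X - {l}) = 2" using assms(2) \<open>l \<in> X\<close> by (simp add: card_Diff_singleton)
  then show "X - {l} \<in> link" using assms(1) X unfolding link_def by simp
qed

lemma link_subset: "e \<in> link \<Longrightarrow> e \<subseteq> U"
  using member_subset unfolding link_def by blast

lemma card_insert_link: "e \<in> link \<Longrightarrow> card (insert l e) = 3"
  using finite_member unfolding link_def by fastforce

lemma link_intersecting:
  assumes "e \<in> link" "f \<in> link"
  shows "e \<inter> f \<noteq> {}"
proof
  assume "e \<inter> f = {}"
  then have "card (insert l e \<inter> insert l f) = 1" by (simp add: insert_commute)
  moreover have "insert l e \<in> F" "insert l f \<in> F" using assms unfolding link_def by auto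
  ultimately show False
    using card_le_member_Int[of "insert l e" "insert l f"] card_insert_link assms by simp
qed

lemma link_not_star_at:
  assumes "c \<in> U" "c \<noteq> l"
  shows "\<exists>e\<in>link. c \<notin> e"
proof (rule ccontr)
  assume star: "\<not> ?thesis"
  have "{c} \<in> F"
  proof (rule in_family_if_close)
    show "{c} \<subseteq> U" using assms(1) by simp
    fix Y assume Y: "Y \<in> F"
    show "card {c} + card Y \<le> 3 + 2 * card ({c} \<inter> Y)"
    proof (cases "card Y = 3")
      case True
      then obtain e where "e \<in> link" "Y = insert l e" using member_card_3_link Y by blast
      then have "{c} \<inter> Y = {c}" using star by blast
      then show ?thesis using True by simp
    next
      case False
      then show ?thesis using card_member_le[OF Y] by simp
    qed
  qed
  then show False using singleton_in_iff assms(2) by simp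
qed

lemma link_not_star: "\<exists>e\<in>link. c \<notin> e"
proof -
  obtain c0 where c0: "c0 \<in> U" "c0 \<noteq> l"
  proof -
    have "\<not> U \<subseteq> {l}" using card_U card_mono[of "{l}" U] by auto
    then show ?thesis using that by blast
  qed
  then obtain e0 where e0: "e0 \<in> link" "c0 \<notin> e0" using link_not_star_at by blast
  show ?thesis
  proof (cases "c \<in> U \<and> c \<noteq> l")
    case True then show ?thesis using link_not_star_at by blast
  next
    case False
    then have "c \<notin> e0" using e0(1) link_subset unfolding link_def by blast
    then show ?thesis using e0(1) by blast
  qed
qed

lemma link_triangle: "\<exists>i j k. distinct [i, j, k] \<and> link = {{i, j}, {j, k}, {i, k}}"
  using link_intersecting link_not_star
  by (intro intersecting_pairs_triangle) (auto simp: link_def)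

end

locale triangle_link = single_neighbour_family +
  fixes i j k :: 'a
  assumes distinct_ijk: "distinct [i, j, k]"
    and link_eq: "link = {{i, j}, {j, k}, {i, k}}"
begin

lemma triangle_in_link: "{i, j} \<in> link" "{j, k} \<in> link" "{i, k} \<in> link"
  using link_eq by auto

lemma triangle_not_l: "l \<notin> {i, j, k}"
  using triangle_in_link unfolding link_def by auto

lemma triangle_subset: "{i, j, k} \<subseteq> U"
  using link_subset triangle_in_link by auto

lemma pair_without_l:
  assumes "X \<in> F" "card X = 2" "l \<notin> X"
  shows "X = {i, j} \<or> X = {j, k} \<or> X = {i, k}"
proof -
  have "X \<inter> e \<noteq> {}" if "e \<in> link" for e
  proof
    assume "X \<inter> e = {}"
    then have "X \<inter> insert l e = {}" using assms(3) by blast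
    moreover have "insert l e \<in> F" using that unfolding link_def by simp
    ultimately show False
      using card_le_member_Int[OF assms(1)] card_insert_link[OF that] assms(2) by fastforce
  qed
  then show ?thesis
    using pair_meeting_triangle[OF assms(2) distinct_ijk] triangle_in_link by blast
qed

lemma pair_with_outside_point_in:
  assumes x: "x \<in> U" "x \<notin> {l, i, j, k}"
  shows "{l, x} \<in> F"
proof -
  obtain Y where Y: "Y \<in> F" "x \<in> Y" using covers x by blast
  have "card Y \<noteq> 0" using Y finite_member by auto
  moreover have "card Y \<noteq> 1"
  proof
    assume "card Y = 1"
    then have "Y = {x}" using Y(2) by (auto simp: card_1_singleton_iff)
    then show False using Y(1) singleton_in_iff x(2) by simp
  qed
  moreover have "card Y \<noteq> 3"
  proof
    assume "card Y = 3"
    then obtain e where "e \<in> link" "Y = insert l e" using member_card_3_link Y(1) by blast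
    then show False using link_eq Y(2) x(2) by auto
  qed
  ultimately have "card Y = 2" using card_member_le[OF Y(1)] by linarith
  moreover have "l \<in> Y" using pair_without_l[OF Y(1) \<open>card Y = 2\<close>] Y(2) x(2) by auto
  moreover have "card {l, x} = 2" using x(2) by auto
  ultimately have "Y = {l, x}"
    using card_subset_eq[OF finite_member[OF Y(1)], of "{l, x}"] Y(2) by simp
  then show ?thesis using Y(1) by simp
qed

text \<open>This is where \<open>5 \<le> card U\<close> enters: it provides a point outside {l, i, j, k}.\<close>

lemma pair_member_contains_l:
  assumes X: "X \<in> F" "card X = 2"
  shows "l \<in> X"
proof (rule ccontr)
  assume "l \<notin> X"
  then have "X \<subseteq> {i, j, k}" using pair_without_l X by blast
  obtain x where x: "x \<in> U" "x \<notin> {l, i, j, k}"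
  proof -
    have "card {l, i, j, k} \<le> 4" by (simp add: card_insert_if)
    then have "\<not> U \<subseteq> {l, i, j, k}" using card_U card_mono[of "{l, i, j, k}" U] by auto
    then show ?thesis using that by blast
  qed
  then have "X \<inter> {l, x} = {}" using \<open>l \<notin> X\<close> \<open>X \<subseteq> {i, j, k}\<close> by blast
  then show False
    using card_le_member_Int[OF X(1) pair_with_outside_point_in[OF x]] X(2) x(2) by auto
qed

lemma pair_with_l_in:
  assumes "m \<in> U"
  shows "{l, m} \<in> F"
proof (rule in_family_if_close)
  show "{l, m} \<subseteq> U" using assms l_in_U by simp
  fix Y assume Y: "Y \<in> F"
  have "card {l, m} \<le> 2" by (simp add: card_insert_if)
  show "card {l, m} + card Y \<le> 3 + 2 * card ({l, m} \<inter> Y)"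
  proof (cases "card Y \<le> 1")
    case True then show ?thesis using \<open>card {l, m} \<le> 2\<close> by linarith
  next
    case False
    then have "l \<in> Y"
      using card_member_le[OF Y] member_card_3_contains_l[OF Y] pair_member_contains_l[OF Y]
      by (cases "card Y = 2") auto
    then have "card {l} \<le> card ({l, m} \<inter> Y)" by (intro card_mono) auto
    then have "1 \<le> card ({l, m} \<inter> Y)" by simp
    then show ?thesis using \<open>card {l, m} \<le> 2\<close> card_member_le[OF Y] by linarith
  qed
qed

theorem family_eq:
  "F = {{}, {l}} \<union> {{l, m} | m. m \<in> U \<and> m \<noteq> l} \<union> {{l, i, j}, {l, j, k}, {l, i, k}}"
proof (intro equalityI subsetI)
  fix X assume X: "X \<in> F"
  consider "card X = 0" | "card X = 1" | "card X = 2" | "card X = 3"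
    using card_member_le[OF X] by linarith
  then show "X \<in> {{}, {l}} \<union> {{l, m} | m. m \<in> U \<and> m \<noteq> l} \<union> {{l, i, j}, {l, j, k}, {l, i, k}}"
  proof cases
    case 1 then show ?thesis using finite_member[OF X] by simp
  next
    case 2 then show ?thesis using X singleton_in_iff by (auto simp: card_1_singleton_iff)
  next
    case 3
    then have "card (X - {l}) = 1" using pair_member_contains_l[OF X] by simp
    then obtain m where "X - {l} = {m}" by (auto simp: card_1_singleton_iff)
    then have "X = {l, m}" "m \<noteq> l" using pair_member_contains_l[OF X 3] by auto
    then show ?thesis using member_subset[OF X] by auto
  next
    case 4
    then obtain e where "e \<in> link" "X = insert l e" using member_card_3_link X by blast
    then show ?thesis using link_eq by auto
  qed
next
  fix X assume "X \<in> {{}, {l}} \<union> {{l, m} | m. m \<in> U \<and> m \<noteq> l} \<union> {{l, i, j}, {l, j, k}, {l, i, k}}"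
  then show "X \<in> F"
    using empty_in singleton_in_iff pair_with_l_in triangle_in_link unfolding link_def by blast
qed

end

context single_neighbour_family
begin

theorem family_structure:
  obtains i j k where "distinct [i, j, k]" "{i, j, k} \<subseteq> U - {l}"
    "F = {{}, {l}} \<union> {{l, m} | m. m \<in> U \<and> m \<noteq> l} \<union> {{l, i, j}, {l, j, k}, {l, i, k}}"
proof -
  obtain i j k where "distinct [i, j, k]" "link = {{i, j}, {j, k}, {i, k}}"
    using link_triangle by blast
  then interpret triangle_link U F l i j k by unfold_locales
  show thesis using that distinct_ijk triangle_subset triangle_not_l family_eq by blast
qed

end

lemma sym_diff_singleton_image:
  assumes "l \<in> U" "{i, j, k} \<subseteq> U - {l}"
  shows "sym_diff {l} ` ({{m} | m. m \<in> U} \<union> {{}, {i, j}, {j, k}, {i, k}}) =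
    {{}, {l}} \<union> {{l, m} | m. m \<in> U \<and> m \<noteq> l} \<union> {{l, i, j}, {l, j, k}, {l, i, k}}"
proof -
  have "sym_diff {l} {m} = (if m = l then {} else {l, m})" for m by auto
  then have "sym_diff {l} ` {{m} | m. m \<in> U} = {{}} \<union> {{l, m} | m. m \<in> U \<and> m \<noteq> l}"
    using assms(1) by (auto simp: image_iff split: if_splits)
  moreover have "sym_diff {l} {a, b} = {l, a, b}" if "a \<noteq> l" "b \<noteq> l" for a b
    using that by auto
  ultimately show ?thesis using assms(2) by (auto simp: image_Un)
qed

definition diff_coords :: "(nat \<Rightarrow> bool) \<Rightarrow> (nat \<Rightarrow> bool) \<Rightarrow> nat set" where
  "diff_coords w x = {i. x i \<noteq> w i}"

lemma flip_diff_coords [simp]: "flip w (diff_coords w x) = x"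
  unfolding flip_def diff_coords_def by auto

lemma diff_coords_flip [simp]: "diff_coords w (flip w I) = I"
  unfolding flip_def diff_coords_def by auto

lemma flip_flip: "flip (flip w A) B = flip w (sym_diff A B)"
  unfolding flip_def by auto

lemma flip_empty [simp]: "flip w {} = w"
  unfolding flip_def by simp

lemma flip_eq_iff [simp]: "flip w A = flip w B \<longleftrightarrow> A = B"
  by (metis diff_coords_flip)

lemma diff_coords_image_iff: "X \<in> diff_coords w ` \<sigma> \<longleftrightarrow> flip w X \<in> \<sigma>"
  by (metis diff_coords_flip flip_diff_coords image_iff)

lemma flip_image_diff_coords: "flip w ` diff_coords w ` \<sigma> = \<sigma>"
  by (simp add: image_image)

lemma flip_in_cube_verts_iff:
  "w \<in> cube_verts n \<Longrightarrow> flip w I \<in> cube_verts n \<longleftrightarrow> I \<subseteq> {1..n}"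
  unfolding cube_verts_def flip_def by auto

lemma hdist_eq_card_sym_diff:
  assumes "x \<in> cube_verts n" "y \<in> cube_verts n"
  shows "hdist n x y = card (sym_diff (diff_coords w x) (diff_coords w y))"
proof -
  have "{i \<in> {1..n}. x i \<noteq> y i} = sym_diff (diff_coords w x) (diff_coords w y)"
    using assms unfolding cube_verts_def diff_coords_def by auto
  then show ?thesis unfolding hdist_def by simp
qed

lemma is_simplex_iff_close_family:
  assumes "w \<in> cube_verts n"
  shows "is_simplex n \<tau> \<longleftrightarrow>
    \<tau> \<noteq> {} \<and> \<tau> \<subseteq> cube_verts n \<and> close_family {1..n} (diff_coords w ` \<tau>)"
proof -
  have "close_family {1..n} (diff_coords w ` \<tau>) \<longleftrightarrow> (\<forall>x\<in>\<tau>. \<forall>y\<in>\<tau>. hdist n x y \<le> 3)"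
    if cube: "\<tau> \<subseteq> cube_verts n"
  proof -
    have "diff_coords w ` \<tau> \<subseteq> Pow {1..n}"
      using cube flip_in_cube_verts_iff[OF assms]
      by (metis PowI flip_diff_coords image_subset_iff subsetD)
    moreover have "hdist n x y = card (sym_diff (diff_coords w x) (diff_coords w y))"
      if "x \<in> \<tau>" "y \<in> \<tau>" for x y
      using that cube by (blast intro: hdist_eq_card_sym_diff)
    ultimately show ?thesis unfolding close_family_def by simp
  qed
  then show ?thesis unfolding is_simplex_def by (metis (no_types))
qed

lemma maximal_simplex_close_family:
  assumes max: "maximal_simplex n \<sigma>" and w: "w \<in> cube_verts n"
  shows "maximal_close_family {1..n} (diff_coords w ` \<sigma>)"
proof -
  have \<sigma>: "\<sigma> \<noteq> {}" "\<sigma> \<subseteq> cube_verts n" "close_family {1..n} (diff_coords w ` \<sigma>)"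
    using max is_simplex_iff_close_family[OF w] unfolding maximal_simplex_def by auto
  have "X \<in> diff_coords w ` \<sigma>"
    if X: "X \<subseteq> {1..n}" "\<forall>Y\<in>diff_coords w ` \<sigma>. card (sym_diff X Y) \<le> 3" for X
  proof -
    have "close_family {1..n} (diff_coords w ` insert (flip w X) \<sigma>)"
      using close_family_insert[OF \<sigma>(3) X] by simp
    then have "is_simplex n (insert (flip w X) \<sigma>)"
      using is_simplex_iff_close_family[OF w] \<sigma>(2) flip_in_cube_verts_iff[OF w] X(1) by simp
    then have "insert (flip w X) \<sigma> = \<sigma>" using max unfolding maximal_simplex_def by blast
    then show ?thesis by (auto simp: diff_coords_image_iff)
  qed
  then show ?thesis using \<sigma>(3) unfolding maximal_close_family_def by blast
qed

lemma covers_all_places_Union: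
  assumes "covers_all_places n \<sigma>"
  shows "{1..n} \<subseteq> \<Union> (diff_coords w ` \<sigma>)"
proof
  fix i assume "i \<in> {1..n}"
  then obtain x y where "x \<in> \<sigma>" "y \<in> \<sigma>" "x i" "\<not> y i"
    using assms unfolding covers_all_places_def by blast
  then show "i \<in> \<Union> (diff_coords w ` \<sigma>)" unfolding diff_coords_def by (cases "w i") auto
qed

lemma singleton_in_diff_coords_iff:
  assumes "\<sigma> \<subseteq> cube_verts n" "w \<in> cube_verts n" "l \<in> {1..n}"
    and "nbhd n w \<inter> \<sigma> = {flip w {l}}"
  shows "{c} \<in> diff_coords w ` \<sigma> \<longleftrightarrow> c = l"
proof -
  have "flip w {c} \<in> \<sigma> \<longleftrightarrow> c = l"
  proof (cases "c \<in> {1..n}")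
    case True
    then have "flip w {c} \<in> nbhd n w" unfolding nbhd_def by blast
    then show ?thesis
      using assms(4) by (metis IntI Int_iff flip_eq_iff insertI1 singletonD singleton_inject)
  next
    case False
    then have "flip w {c} \<notin> cube_verts n" using flip_in_cube_verts_iff[OF assms(2)] by simp
    then show ?thesis using assms(1,3) False by auto
  qed
  then show ?thesis by (simp add: diff_coords_image_iff)
qed

lemma nbhd_Un_Kset_eq_image:
  "nbhd n v \<union> Kset v i j k = flip v ` ({{m} | m. m \<in> {1..n}} \<union> {{}, {i, j}, {j, k}, {i, k}})"
  unfolding nbhd_def Kset_def by auto

theorem mainTheorem8:
  fixes n :: nat and \<sigma> :: "(nat \<Rightarrow> bool) set" and v w :: "nat \<Rightarrow> bool"
  assumes "n \<ge> 5"
    and "maximal_simplex n \<sigma>"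
    and "covers_all_places n \<sigma>"
    and "w \<in> \<sigma>"
    and "nbhd n w \<inter> \<sigma> = {v}"
  shows "\<exists>i0 j0 k0. i0 \<in> {1..n} \<and> j0 \<in> {1..n} \<and> k0 \<in> {1..n} \<and>
           i0 \<noteq> j0 \<and> j0 \<noteq> k0 \<and> i0 \<noteq> k0 \<and>
           \<sigma> = nbhd n v \<union> Kset v i0 j0 k0"
proof -
  have cube: "\<sigma> \<subseteq> cube_verts n" and w: "w \<in> cube_verts n"
    using assms(2,4) unfolding maximal_simplex_def is_simplex_def by auto
  obtain l where l: "l \<in> {1..n}" "v = flip w {l}"
    using assms(5) unfolding nbhd_def by blast
  interpret single_neighbour_family "{1..n}" "diff_coords w ` \<sigma>" l
    using assms(1) maximal_simplex_close_family[OF assms(2) w] covers_all_places_Union[OF assms(3)]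
      singleton_in_diff_coords_iff[OF cube w l(1)] assms(4,5) l(2)
    by unfold_locales (auto simp: diff_coords_image_iff)
  obtain i j k where ijk: "distinct [i, j, k]" "{i, j, k} \<subseteq> {1..n} - {l}"
    and F: "diff_coords w ` \<sigma> =
      {{}, {l}} \<union> {{l, m} | m. m \<in> {1..n} \<and> m \<noteq> l} \<union> {{l, i, j}, {l, j, k}, {l, i, k}}"
    by (rule family_structure)
  have "\<sigma> = flip w ` sym_diff {l} ` ({{m} | m. m \<in> {1..n}} \<union> {{}, {i, j}, {j, k}, {i, k}})"
    using flip_image_diff_coords[of w \<sigma>] F sym_diff_singleton_image[OF l(1) ijk(2)] by simp
  also have "\<dots> = nbhd n v \<union> Kset v i j k"
    unfolding nbhd_Un_Kset_eq_image l(2) image_image flip_flip ..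
  finally show ?thesis using ijk by auto
qed

end
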